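(* Let $\langle \mathsf{E}, \mathsf{po}, \mathsf{mo}\rangle$ be a partial 1-Writer execution graph in which $\mathsf{mo}$ agrees with $\mathsf{po}$, and let $\mathsf{rf}_1,\mathsf{rf}_2$ be two reads-from relations over it. (1) If $\mathsf{rf}_1 \sqsubseteq \mathsf{rf}_2$ and $\mathsf{po}\cup\mathsf{rf}_1$ has a cycle, then $\mathsf{po}\cup\mathsf{rf}_2$ has a cycle. (2) If both $\mathsf{rf}_1$ and $\mathsf{rf}_2$ satisfy relaxed-read-coherence, then $\min(\mathsf{rf}_1,\mathsf{rf}_2)$ also satisfies relaxed-read-coherence.
   Context: Events are reads $\mathtt{r}(x,v)$ or writes $\mathtt{w}(x,v)$ on a variable $x$ with value $v$, each belonging to a thread; $\mathsf{po}$ (program order) is a strict partial order totally ordering the events of each thread and relating no events of different threads. 1-Writer: for every variable $x$ all writes to $x$ lie in a single thread. $\mathsf{mo}=\bigcup_x\mathsf{mo}_x$ with $\mathsf{mo}_x$ a strict total order on writes to $x$; "agrees with $\mathsf{po}$" means $w\,\mathsf{mo}\,w'$ implies $w\,\mathsf{po}\,w'$. A reads-from relation $\mathsf{rf}$ maps every read $r$ to a unique write $\mathsf{rf}^{-1}(r)$ with the same variable and value. $\mathsf{rf}_1\sqsubseteq\mathsf{rf}_2$ iff for every read $r$, $\mathsf{rf}_1^{-1}(r)\,\mathsf{po}^*\,\mathsf{rf}_2^{-1}(r)$. $\min(\mathsf{rf}_1,\mathsf{rf}_2)$ maps every read $r$ to the $\mathsf{po}$-smaller of $\mathsf{rf}_1^{-1}(r),\mathsf{rf}_2^{-1}(r)$.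 $\mathsf{rf}$ satisfies relaxed-read-coherence if the relation $\mathsf{rf}^{-1};\mathsf{mo}_x;\mathsf{rf}^?;\mathsf{po}$ is irreflexive for every $x$, i.e. there is no read $r$ of $x$ and writes $w,w'$ of $x$ with $w\,\mathsf{rf}\,r$, $w\,\mathsf{mo}_x\,w'$, and either $w'\,\mathsf{po}\,r$ or there is a read $r'$ with $w'\,\mathsf{rf}\,r'$ and $r'\,\mathsf{po}\,r$. *)

theory Defs
  imports Main
begin

datatype ('x,'v) act = Rd 'x 'v | Wr 'x 'v

fun avar :: "('x,'v) act \<Rightarrow> 'x" where
  "avar (Rd x v) = x" | "avar (Wr x v) = x"
fun aval :: "('x,'v) act \<Rightarrow> 'v" where
  "aval (Rd x v) = v" | "aval (Wr x v) = v"
fun is_rd :: "('x,'v) act \<Rightarrow> bool" where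
  "is_rd (Rd x v) = True" | "is_rd (Wr x v) = False"
fun is_wr :: "('x,'v) act \<Rightarrow> bool" where
  "is_wr (Rd x v) = False" | "is_wr (Wr x v) = True"

definition reads :: "('e \<Rightarrow> ('x,'v) act) \<Rightarrow> 'e set \<Rightarrow> 'e set" where
  "reads lab E = {e \<in> E. is_rd (lab e)}"
definition writes :: "('e \<Rightarrow> ('x,'v) act) \<Rightarrow> 'e set \<Rightarrow> 'e set" where
  "writes lab E = {e \<in> E. is_wr (lab e)}"

definition program_order :: "('e \<Rightarrow> 't) \<Rightarrow> 'e set \<Rightarrow> ('e \<times> 'e) set \<Rightarrow> bool" where
  "program_order tid E po \<longleftrightarrow>
     po \<subseteq> E \<times> E \<and> irrefl po \<and> trans po \<and>
     (\<forall>e\<in>E. \<forall>e'\<in>E. e \<noteq> e' \<and> tid e = tid e' \<longrightarrow> (e, e') \<in> po \<or> (e', e) \<in> po) \<and>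
     (\<forall>(e, e')\<in>po. tid e = tid e')"

definition mo_x :: "('e \<Rightarrow> ('x,'v) act) \<Rightarrow> 'e set \<Rightarrow> ('e \<times> 'e) set \<Rightarrow> 'x \<Rightarrow> ('e \<times> 'e) set" where
  "mo_x lab E mo x = {(w, w'). (w, w') \<in> mo \<and> w \<in> writes lab E \<and> w' \<in> writes lab E
                                \<and> avar (lab w) = x \<and> avar (lab w') = x}"

definition modification_order :: "('e \<Rightarrow> ('x,'v) act) \<Rightarrow> 'e set \<Rightarrow> ('e \<times> 'e) set \<Rightarrow> bool" where
  "modification_order lab E mo \<longleftrightarrow>
     mo = (\<Union>x. mo_x lab E mo x) \<and>
     (\<forall>x. let W = {w \<in> writes lab E. avar (lab w) = x} in
            irrefl (mo_x lab E mo x) \<and> trans (mo_x lab E mo x) \<and>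
            (\<forall>w\<in>W. \<forall>w'\<in>W. w \<noteq> w' \<longrightarrow> (w, w') \<in> mo_x lab E mo x \<or> (w', w) \<in> mo_x lab E mo x))"

definition one_writer :: "('e \<Rightarrow> ('x,'v) act) \<Rightarrow> ('e \<Rightarrow> 't) \<Rightarrow> 'e set \<Rightarrow> bool" where
  "one_writer lab tid E \<longleftrightarrow>
     (\<forall>w\<in>writes lab E. \<forall>w'\<in>writes lab E. avar (lab w) = avar (lab w') \<longrightarrow> tid w = tid w')"

definition execution_graph ::
  "('e \<Rightarrow> ('x,'v) act) \<Rightarrow> ('e \<Rightarrow> 't) \<Rightarrow> 'e set \<Rightarrow> ('e \<times> 'e) set \<Rightarrow> ('e \<times> 'e) set \<Rightarrow> bool" where
  "execution_graph lab tid E po mo \<longleftrightarrow> program_order tid E po \<and> modification_order lab E mo"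

definition mo_agrees_po :: "('e \<times> 'e) set \<Rightarrow> ('e \<times> 'e) set \<Rightarrow> bool" where
  "mo_agrees_po mo po \<longleftrightarrow> mo \<subseteq> po"

text \<open>A reads-from relation is given by the function rf mapping each read r to its unique
  write rf r (= rf^{-1}(r)); values of rf outside the reads are irrelevant.\<close>
definition reads_from :: "('e \<Rightarrow> ('x,'v) act) \<Rightarrow> 'e set \<Rightarrow> ('e \<Rightarrow> 'e) \<Rightarrow> bool" where
  "reads_from lab E rf \<longleftrightarrow>
     (\<forall>r\<in>reads lab E. rf r \<in> writes lab E \<and> avar (lab (rf r)) = avar (lab r)
                      \<and> aval (lab (rf r)) = aval (lab r))"

definition rf_rel :: "('e \<Rightarrow> ('x,'v) act) \<Rightarrow> 'e set \<Rightarrow> ('e \<Rightarrow> 'e) \<Rightarrow> ('e \<times> 'e) set" where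
  "rf_rel lab E rf = {(rf r, r) | r. r \<in> reads lab E}"

definition rf_le :: "('e \<Rightarrow> ('x,'v) act) \<Rightarrow> 'e set \<Rightarrow> ('e \<times> 'e) set \<Rightarrow> ('e \<Rightarrow> 'e) \<Rightarrow> ('e \<Rightarrow> 'e) \<Rightarrow> bool" where
  "rf_le lab E po rf1 rf2 \<longleftrightarrow> (\<forall>r\<in>reads lab E. (rf1 r, rf2 r) \<in> po\<^sup>*)"

definition rf_min :: "('e \<times> 'e) set \<Rightarrow> ('e \<Rightarrow> 'e) \<Rightarrow> ('e \<Rightarrow> 'e) \<Rightarrow> ('e \<Rightarrow> 'e)" where
  "rf_min po rf1 rf2 = (\<lambda>r. if (rf1 r, rf2 r) \<in> po\<^sup>* then rf1 r else rf2 r)"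

definition has_cycle :: "('e \<times> 'e) set \<Rightarrow> bool" where
  "has_cycle R \<longleftrightarrow> (\<exists>a. (a, a) \<in> R\<^sup>+)"

text \<open>Irreflexivity of rf^{-1}; mo_x; rf^?; po for every x.\<close>
definition relaxed_read_coherence ::
  "('e \<Rightarrow> ('x,'v) act) \<Rightarrow> 'e set \<Rightarrow> ('e \<times> 'e) set \<Rightarrow> ('e \<times> 'e) set \<Rightarrow> ('e \<Rightarrow> 'e) \<Rightarrow> bool" where
  "relaxed_read_coherence lab E po mo rf \<longleftrightarrow>
     (\<forall>x. \<not> (\<exists>r w w'. r \<in> reads lab E \<and> avar (lab r) = x \<and>
                       (w, r) \<in> rf_rel lab E rf \<and> (w, w') \<in> mo_x lab E mo x \<and>
                       ((w', r) \<in> po \<or> (\<exists>r'. (w', r') \<in> rf_rel lab E rf \<and> (r', r) \<in> po))))"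

end

theory Submission
  imports Defs
begin

text \<open>(1) If \<open>rf\<^sub>1 \<sqsubseteq> rf\<^sub>2\<close>, each edge \<open>rf\<^sub>1 r \<rightarrow> r\<close> is simulated by the path
  \<open>rf\<^sub>1 r \<rightarrow>\<^sub>p\<^sub>o\<^sup>* rf\<^sub>2 r \<rightarrow> r\<close>, so a cycle of \<open>po \<union> rf\<^sub>1\<close> becomes one of \<open>po \<union> rf\<^sub>2\<close>.
  (2) By 1-Writer all writes to a variable are \<open>po\<close>-comparable, so \<open>min(rf\<^sub>1, rf\<^sub>2)\<close> picks, for
  every read, the source of one of \<open>rf\<^sub>1, rf\<^sub>2\<close>, and is \<open>po\<^sup>*\<close>-below both. A violation
  \<open>w \<rightarrow>\<^sub>m\<^sub>o w' \<rightarrow>\<^sub>r\<^sub>f r' \<rightarrow>\<^sub>p\<^sub>o r\<close> of the minimum, with \<open>w = rf\<^sub>i r\<close>, then yields the violation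
  \<open>w \<rightarrow>\<^sub>m\<^sub>o rf\<^sub>i r' \<rightarrow>\<^sub>r\<^sub>f r' \<rightarrow>\<^sub>p\<^sub>o r\<close> of \<open>rf\<^sub>i\<close>: since \<open>w' \<rightarrow>\<^sub>p\<^sub>o\<^sup>* rf\<^sub>i r'\<close> and \<open>mo\<close> agrees
  with \<open>po\<close>, the totality of \<open>mo\<^sub>x\<close> forces \<open>w \<rightarrow>\<^sub>m\<^sub>o rf\<^sub>i r'\<close>.\<close>

lemma has_cycle_mono_trancl:
  assumes "R \<subseteq> S\<^sup>+" and "has_cycle R"
  shows "has_cycle S"
proof -
  from \<open>has_cycle R\<close> obtain a where "(a, a) \<in> R\<^sup>+"
    unfolding has_cycle_def by blast
  then have "(a, a) \<in> (S\<^sup>+)\<^sup>+"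
    using trancl_mono[OF _ assms(1)] by blast
  then show ?thesis
    unfolding has_cycle_def by auto
qed

lemma rf_rel_subset_trancl_if_rf_le:
  assumes "rf_le lab E po rf1 rf2"
  shows "rf_rel lab E rf1 \<subseteq> (po \<union> rf_rel lab E rf2)\<^sup>+"
proof
  fix p assume "p \<in> rf_rel lab E rf1"
  then obtain r where p: "p = (rf1 r, r)" and r: "r \<in> reads lab E"
    unfolding rf_rel_def by blast
  have "(rf1 r, rf2 r) \<in> (po \<union> rf_rel lab E rf2)\<^sup>*"
    using assms r rtrancl_mono[of po "po \<union> rf_rel lab E rf2"]
    unfolding rf_le_def by blast
  moreover have "(rf2 r, r) \<in> po \<union> rf_rel lab E rf2"
    using r unfolding rf_rel_def by blast
  ultimately show "p \<in> (po \<union> rf_rel lab E rf2)\<^sup>+"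
    unfolding p by (rule rtrancl_into_trancl1)
qed

lemma has_cycle_po_rf_if_rf_le:
  assumes "rf_le lab E po rf1 rf2" and "has_cycle (po \<union> rf_rel lab E rf1)"
  shows "has_cycle (po \<union> rf_rel lab E rf2)"
proof (rule has_cycle_mono_trancl[OF _ assms(2)])
  show "po \<union> rf_rel lab E rf1 \<subseteq> (po \<union> rf_rel lab E rf2)\<^sup>+"
    using rf_rel_subset_trancl_if_rf_le[OF assms(1)] by auto
qed

lemma relaxed_read_coherence_iff:
  "relaxed_read_coherence lab E po mo rf \<longleftrightarrow>
     (\<forall>r\<in>reads lab E. \<forall>w'. (rf r, w') \<in> mo_x lab E mo (avar (lab r)) \<longrightarrow>
        (w', r) \<notin> po \<and> (\<forall>r'\<in>reads lab E. rf r' = w' \<longrightarrow> (r', r) \<notin> po))"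
  unfolding relaxed_read_coherence_def rf_rel_def by blast

lemma relaxed_read_coherenceD:
  assumes "relaxed_read_coherence lab E po mo rf" and "r \<in> reads lab E"
    and "(rf r, w') \<in> mo_x lab E mo (avar (lab r))"
  shows "(w', r) \<notin> po" and "r' \<in> reads lab E \<Longrightarrow> rf r' = w' \<Longrightarrow> (r', r) \<notin> po"
  using assms unfolding relaxed_read_coherence_iff by blast+

lemma reads_from_rf_min:
  assumes "reads_from lab E rf1" and "reads_from lab E rf2"
  shows "reads_from lab E (rf_min po rf1 rf2)"
  using assms unfolding reads_from_def rf_min_def by auto

lemma reads_from_sources_po_comparable:
  assumes "program_order tid E po" and "one_writer lab tid E"
    and "reads_from lab E rf1" and "reads_from lab E rf2" and "r \<in> reads lab E"
  shows "(rf1 r, rf2 r) \<in> po\<^sup>* \<or> (rf2 r, rf1 r) \<in> po"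
proof -
  have w: "rf1 r \<in> writes lab E" "rf2 r \<in> writes lab E"
    "avar (lab (rf1 r)) = avar (lab (rf2 r))"
    using assms(3-5) unfolding reads_from_def by auto
  then have "tid (rf1 r) = tid (rf2 r)"
    using assms(2) unfolding one_writer_def by blast
  moreover have "rf1 r \<in> E" "rf2 r \<in> E"
    using w unfolding writes_def by auto
  ultimately consider "rf1 r = rf2 r" | "(rf1 r, rf2 r) \<in> po" | "(rf2 r, rf1 r) \<in> po"
    using assms(1) unfolding program_order_def by blast
  then show ?thesis
    by cases auto
qed

lemma rf_min_rtrancl_po:
  assumes "program_order tid E po" and "one_writer lab tid E"
    and "reads_from lab E rf1" and "reads_from lab E rf2" and "r \<in> reads lab E"
  shows "(rf_min po rf1 rf2 r, rf1 r) \<in> po\<^sup>*" and "(rf_min po rf1 rf2 r, rf2 r) \<in> po\<^sup>*"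
  using reads_from_sources_po_comparable[OF assms] unfolding rf_min_def by auto

lemma mo_x_po_rtrancl_trans:
  assumes "modification_order lab E mo" and "mo \<subseteq> po" and "irrefl po" and "trans po"
    and "(w, w') \<in> mo_x lab E mo x" and "(w', w'') \<in> po\<^sup>*"
    and "w'' \<in> writes lab E" and "avar (lab w'') = x"
  shows "(w, w'') \<in> mo_x lab E mo x"
proof -
  have w: "w \<in> writes lab E" "avar (lab w) = x" and "(w, w') \<in> po"
    using assms(2,5) unfolding mo_x_def by auto
  then have "(w, w'') \<in> po"
    using assms(4,6) by (metis rtrancl_eq_or_trancl trancl_id transD)
  then have "w \<noteq> w''" and "(w'', w) \<notin> po"
    using assms(3,4) unfolding irrefl_def trans_def by blast+
  moreover have "(w, w'') \<in> mo_x lab E mo x \<or> (w'', w) \<in> mo_x lab E mo x"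
    using assms(1,7,8) w \<open>w \<noteq> w''\<close> unfolding modification_order_def Let_def by blast
  ultimately show ?thesis
    using assms(2) unfolding mo_x_def by blast
qed

lemma relaxed_read_coherence_rf_min:
  assumes po: "program_order tid E po" and mo: "modification_order lab E mo"
    and one_writer: "one_writer lab tid E" and mo_po: "mo \<subseteq> po"
    and rf: "reads_from lab E rf1" "reads_from lab E rf2"
    and coh: "relaxed_read_coherence lab E po mo rf1" "relaxed_read_coherence lab E po mo rf2"
  shows "relaxed_read_coherence lab E po mo (rf_min po rf1 rf2)"
  unfolding relaxed_read_coherence_iff
proof (intro ballI allI impI conjI)
  let ?m = "rf_min po rf1 rf2"
  fix r w' assume r: "r \<in> reads lab E" and m_w': "(?m r, w') \<in> mo_x lab E mo (avar (lab r))"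
  define i where "i = (if (rf1 r, rf2 r) \<in> po\<^sup>* then rf1 else rf2)"
  have i: "i = rf1 \<or> i = rf2"
    unfolding i_def by simp
  have w_w': "(i r, w') \<in> mo_x lab E mo (avar (lab r))"
    using m_w' unfolding i_def rf_min_def by (simp split: if_splits)
  have coh_i: "relaxed_read_coherence lab E po mo i" and rf_i: "reads_from lab E i"
    using coh rf i by auto
  show "(w', r) \<notin> po"
    using relaxed_read_coherenceD(1)[OF coh_i r w_w'] .
  fix r' assume r': "r' \<in> reads lab E" "?m r' = w'"
  have "avar (lab r') = avar (lab r)"
    using reads_from_rf_min[OF rf, of po] r' w_w' unfolding reads_from_def mo_x_def by auto
  then have "i r' \<in> writes lab E" "avar (lab (i r')) = avar (lab r)"
    using rf_i r'(1) unfolding reads_from_def by auto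
  moreover have "(w', i r') \<in> po\<^sup>*"
    using rf_min_rtrancl_po[OF po one_writer rf r'(1)] i r'(2) by auto
  moreover have "irrefl po" "trans po"
    using po unfolding program_order_def by auto
  ultimately have "(i r, i r') \<in> mo_x lab E mo (avar (lab r))"
    using mo_x_po_rtrancl_trans[OF mo mo_po _ _ w_w'] by blast
  then show "(r', r) \<notin> po"
    using relaxed_read_coherenceD(2)[OF coh_i r _ r'(1)] by blast
qed

theorem mainTheorem8:
  fixes lab :: "'e \<Rightarrow> ('x,'v) act" and tid :: "'e \<Rightarrow> 't"
    and E :: "'e set" and po mo :: "('e \<times> 'e) set" and rf1 rf2 :: "'e \<Rightarrow> 'e"
  assumes "execution_graph lab tid E po mo"
    and "one_writer lab tid E"
    and "mo_agrees_po mo po"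
    and "reads_from lab E rf1" and "reads_from lab E rf2"
  shows "(rf_le lab E po rf1 rf2 \<and> has_cycle (po \<union> rf_rel lab E rf1)
            \<longrightarrow> has_cycle (po \<union> rf_rel lab E rf2))
       \<and> (relaxed_read_coherence lab E po mo rf1 \<and> relaxed_read_coherence lab E po mo rf2
            \<longrightarrow> relaxed_read_coherence lab E po mo (rf_min po rf1 rf2))"
proof -
  have po: "program_order tid E po" and mo: "modification_order lab E mo"
    using assms(1) unfolding execution_graph_def by auto
  have "mo \<subseteq> po"
    using assms(3) unfolding mo_agrees_po_def .
  then show ?thesis
    using has_cycle_po_rf_if_rf_le relaxed_read_coherence_rf_min[OF po mo assms(2) _ assms(4,5)]
    by blast
qed

end
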